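(* For either choice $\zeta\in\{q,-q^3\}$, the function $\bar{\mathcal{F}}(v_1,v_2\mid\lambda_1,\dots,\lambda_{L-1})=\langle\bar0|\mathcal{B}(v_2)\mathcal{B}(v_1)\mathcal{E}(\lambda_{L-1})\cdots\mathcal{E}(\lambda_1)|0\rangle$ can be written as $\bar{\mathcal{F}}(v_1,v_2\mid\lambda_1,\dots,\lambda_{L-1})=\bar\omega(y_2)\,\bar{\mathcal{H}}(v_1,v_2\mid\lambda_1,\dots,\lambda_{L-1})$ with $y_2=e^{2v_2}$, $\bar\omega(y)=\prod_{j=1}^L(y-e^{2\mu_j})$, where $\bar{\mathcal{H}}$ is a polynomial of degree $L-1$ in the variable $y_2$.
   Context: Let $q\in\mathbb{C}\setminus\{0\}$ (with a fixed choice of $q^{1/2}$) and $\zeta\in\{q,-q^3\}$ ($\zeta=q$: Fateev–Zamolodchikov model; $\zeta=-q^3$: Izergin–Korepin model). For $\lambda\in\mathbb{C}$ put $x=e^{2\lambda}$ and define $a(\lambda)=(x-\zeta)(x-q^2)$, $b(\lambda)=q(x-1)(x-\zeta)$, $c(\lambda)=(1-q^2)(x-\zeta)$, $\bar c(\lambda)=x(1-q^2)(x-\zeta)$, and for $\alpha,\beta\in\{1,2,3\}$, with $\beta'=4-\beta$: $d_{\alpha,\beta}(\lambda)=q(x-1)(x-\zeta)+x(q^2-1)(\zeta-1)$ if $\alpha=\beta=2$; $d_{\alpha,\beta}(\lambda)=(x-1)[(x-\zeta)+x(q^2-1)]$ if $\alpha=\beta\neq 2$; $d_{\alpha,\beta}(\lambda)=(q^2-1)[\zeta(x-1)q^{(\alpha-\beta)/2}-\delta_{\alpha,\beta'}(x-\zeta)]$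 if $\alpha<\beta$; $d_{\alpha,\beta}(\lambda)=x(q^2-1)[(x-1)q^{(\alpha-\beta)/2}-\delta_{\alpha,\beta'}(x-\zeta)]$ if $\alpha>\beta$. Let $e_1,e_2,e_3$ be the standard basis of $\mathbb{C}^3$ and $E_{\alpha,\beta}$ the unit matrices. Define $\mathcal{R}(\lambda)\in\mathrm{End}(\mathbb{C}^3\otimes\mathbb{C}^3)$ as the $9\times 9$ matrix in the ordered basis $e_1\otimes e_1,e_1\otimes e_2,e_1\otimes e_3,e_2\otimes e_1,e_2\otimes e_2,e_2\otimes e_3,e_3\otimes e_1,e_3\otimes e_2,e_3\otimes e_3$ (indices $1,\dots,9$) whose only nonzero entries (row, column) are: $(1,1)=a$; $(2,2)=b$, $(2,4)=c$; $(3,3)=d_{1,1}$, $(3,5)=d_{1,2}$, $(3,7)=d_{1,3}$; $(4,2)=\bar c$, $(4,4)=b$; $(5,3)=d_{2,1}$, $(5,5)=d_{2,2}$, $(5,7)=d_{2,3}$; $(6,6)=b$, $(6,8)=c$; $(7,3)=d_{3,1}$, $(7,5)=d_{3,2}$, $(7,7)=d_{3,3}$; $(8,6)=\bar c$, $(8,8)=b$; $(9,9)=a$ (all evaluated at $\lambda$). Fix $L\ge1$ and inhomogeneities $\mu_1,\dots,\mu_L\in\mathbb{C}$. With $V_a=V_1=\dots=V_L=\mathbb{C}^3$, let $\mathcal{T}(\lambda)=\mathcal{R}_{a1}(\lambda-\mu_1)\cdots\mathcal{R}_{aL}(\lambda-\mu_L)$, where $\mathcal{R}_{aj}$ acts as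 $\mathcal{R}$ on $V_a\otimes V_j$. Write $\mathcal{T}(\lambda)=\sum_{\alpha,\beta}E_{\alpha,\beta}\otimes\mathcal{T}_\alpha^\beta(\lambda)$ and set $\mathcal{B}(\lambda)=\mathcal{T}_1^2(\lambda)$, $\mathcal{E}(\lambda)=\mathcal{T}_1^3(\lambda)$, operators on $V_1\otimes\cdots\otimes V_L$. Let $|0\rangle=e_1^{\otimes L}$ and let $\langle\bar0|$ be the dual vector of $e_3^{\otimes L}$. *)

theory Defs
  imports Complex_Main "HOL-Computational_Algebra.Polynomial"
begin

text \<open>Parameters: q (nonzero), s = chosen square root of q (s^2 = q), z = zeta.
  x stands for e^{2 lambda}.  Auxiliary/quantum space indices range over {1,2,3}.\<close>

definition Ra :: "complex \<Rightarrow> complex \<Rightarrow> complex \<Rightarrow> complex" where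
  "Ra q z x = (x - z) * (x - q^2)"
definition Rb :: "complex \<Rightarrow> complex \<Rightarrow> complex \<Rightarrow> complex" where
  "Rb q z x = q * (x - 1) * (x - z)"
definition Rc :: "complex \<Rightarrow> complex \<Rightarrow> complex \<Rightarrow> complex" where
  "Rc q z x = (1 - q^2) * (x - z)"
definition Rcbar :: "complex \<Rightarrow> complex \<Rightarrow> complex \<Rightarrow> complex" where
  "Rcbar q z x = x * (1 - q^2) * (x - z)"

definition Rd :: "complex \<Rightarrow> complex \<Rightarrow> complex \<Rightarrow> complex \<Rightarrow> nat \<Rightarrow> nat \<Rightarrow> complex" where
  "Rd q s z x \<alpha> \<beta> =
     (if \<alpha> = 2 \<and> \<beta> = 2 then q * (x - 1) * (x - z) + x * (q^2 - 1) * (z - 1)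
      else if \<alpha> = \<beta> then (x - 1) * ((x - z) + x * (q^2 - 1))
      else if \<alpha> < \<beta> then (q^2 - 1) * (z * (x - 1) * s powi (int \<alpha> - int \<beta>)
                                 - (if \<alpha> + \<beta> = 4 then x - z else 0))
      else x * (q^2 - 1) * ((x - 1) * s powi (int \<alpha> - int \<beta>)
                                 - (if \<alpha> + \<beta> = 4 then x - z else 0)))"

definition Rmat :: "complex \<Rightarrow> complex \<Rightarrow> complex \<Rightarrow> complex \<Rightarrow> nat \<Rightarrow> nat \<Rightarrow> complex" where
  "Rmat q s z lam r c =
     (let x = exp (2 * lam) in
      if (r, c) = (1, 1) \<or> (r, c) = (9, 9) then Ra q z x
      else if (r, c) = (2, 2) \<or> (r, c) = (4, 4) \<or> (r, c) = (6, 6) \<or> (r, c) = (8, 8) then Rb q z x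
      else if (r, c) = (2, 4) \<or> (r, c) = (6, 8) then Rc q z x
      else if (r, c) = (4, 2) \<or> (r, c) = (8, 6) then Rcbar q z x
      else if r \<in> {3, 5, 7} \<and> c \<in> {3, 5, 7} then Rd q s z x ((r - 1) div 2) ((c - 1) div 2)
      else 0)"

text \<open>Entry of R on V_a \<otimes> V_j: row e_\<alpha> \<otimes> e_i, column e_\<beta> \<otimes> e_j.\<close>
definition Rent :: "complex \<Rightarrow> complex \<Rightarrow> complex \<Rightarrow> complex \<Rightarrow> nat \<Rightarrow> nat \<Rightarrow> nat \<Rightarrow> nat \<Rightarrow> complex" where
  "Rent q s z lam \<alpha> i \<beta> j = Rmat q s z lam (3 * (\<alpha> - 1) + i) (3 * (\<beta> - 1) + j)"

text \<open>Matrix element <is| T_\<alpha>^\<beta>(lam) |js> of the monodromy matrix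
  R_{a1}(lam - mu_1) ... R_{aL}(lam - mu_L), with mus = [mu_1, ..., mu_L].\<close>
fun mono :: "complex \<Rightarrow> complex \<Rightarrow> complex \<Rightarrow> complex \<Rightarrow> complex list \<Rightarrow> nat \<Rightarrow> nat
             \<Rightarrow> nat list \<Rightarrow> nat list \<Rightarrow> complex" where
  "mono q s z lam [] \<alpha> \<beta> is js = (if \<alpha> = \<beta> \<and> is = [] \<and> js = [] then 1 else 0)"
| "mono q s z lam (mu # mus) \<alpha> \<beta> (i # is) (j # js) =
     (\<Sum>\<gamma>\<in>{1..3}. Rent q s z (lam - mu) \<alpha> i \<gamma> j * mono q s z lam mus \<gamma> \<beta> is js)"
| "mono q s z lam (mu # mus) \<alpha> \<beta> _ _ = 0"

text \<open>Basis labels of V_1 \<otimes> ... \<otimes> V_L.\<close>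
definition states :: "nat \<Rightarrow> nat list set" where
  "states L = {js. length js = L \<and> set js \<subseteq> {1, 2, 3}}"

definition applyOp :: "nat \<Rightarrow> (nat list \<Rightarrow> nat list \<Rightarrow> complex) \<Rightarrow> (nat list \<Rightarrow> complex)
                        \<Rightarrow> nat list \<Rightarrow> complex" where
  "applyOp L A v = (\<lambda>is. \<Sum>js\<in>states L. A is js * v js)"

definition mus :: "nat \<Rightarrow> (nat \<Rightarrow> complex) \<Rightarrow> complex list" where
  "mus L mu = map mu [1..<L + 1]"

definition Bop :: "complex \<Rightarrow> complex \<Rightarrow> complex \<Rightarrow> nat \<Rightarrow> (nat \<Rightarrow> complex) \<Rightarrow> complex
                    \<Rightarrow> nat list \<Rightarrow> nat list \<Rightarrow> complex" where
  "Bop q s z L mu lam = mono q s z lam (mus L mu) 1 2"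

definition Eop :: "complex \<Rightarrow> complex \<Rightarrow> complex \<Rightarrow> nat \<Rightarrow> (nat \<Rightarrow> complex) \<Rightarrow> complex
                    \<Rightarrow> nat list \<Rightarrow> nat list \<Rightarrow> complex" where
  "Eop q s z L mu lam = mono q s z lam (mus L mu) 1 3"

definition vac :: "nat \<Rightarrow> nat list \<Rightarrow> complex" where
  "vac L = (\<lambda>js. if js = replicate L 1 then 1 else 0)"

definition Fbar :: "complex \<Rightarrow> complex \<Rightarrow> complex \<Rightarrow> nat \<Rightarrow> (nat \<Rightarrow> complex)
                    \<Rightarrow> complex \<Rightarrow> complex \<Rightarrow> (nat \<Rightarrow> complex) \<Rightarrow> complex" where
  "Fbar q s z L mu v1 v2 lam =
     (let w = fold (\<lambda>k w. applyOp L (Eop q s z L mu (lam k)) w) [1..<L] (vac L);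
          w' = applyOp L (Bop q s z L mu v2) (applyOp L (Bop q s z L mu v1) w)
      in w' (replicate L 3))"

definition omegabar :: "nat \<Rightarrow> (nat \<Rightarrow> complex) \<Rightarrow> complex \<Rightarrow> complex" where
  "omegabar L mu y = (\<Prod>j=1..L. (y - exp (2 * mu j)))"

end

(*
  Along the row <3...3| the R-matrix only lets the auxiliary index grow: from e_alpha (x) e_3
  the nonzero entries are d_{1,gamma} (alpha = 1), b and c (alpha = 2) and a (alpha = 3), and
  they lead to auxiliary index gamma >= alpha.  So <3...3|B(v)|js> is a sum over paths of the
  auxiliary index from 1 to 2, i.e. products of factors d_{1,1}, one d_{1,2} and factors b.
  Each of them has the factor x - 1, x = e^{2(v - mu_j)}, and these factors together give
  omegabar(e^{2v}) up to a constant; the cofactors q^2 x - zeta and q (x - zeta) are linear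
  and that of d_{1,2} is constant, so the quotient has degree L - 1.  As
  B(v_1) E(lambda_{L-1}) ... E(lambda_1)|0> does not involve v_2, Fbar is a linear combination
  of such matrix elements.
*)
theory Submission
  imports Defs
begin

lemma exp_double_diff: "exp (2 * (lam - m)) = exp (2 * lam) / exp (2 * m :: complex)"
  by (simp add: right_diff_distrib exp_diff)

lemma Rb_factor:
  "Rb q z (exp (2 * (lam - m))) =
     (exp (2 * lam) - exp (2 * m)) * poly [:- q * z / exp (2 * m), q / exp (2 * m)^2:] (exp (2 * lam))"
  unfolding exp_double_diff by (simp add: Rb_def field_simps power2_eq_square)

lemma Rd11_factor:
  "Rd q s z (exp (2 * (lam - m))) 1 1 =
     (exp (2 * lam) - exp (2 * m)) * poly [:- z / exp (2 * m), q^2 / exp (2 * m)^2:] (exp (2 * lam))"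
  unfolding exp_double_diff by (simp add: Rd_def field_simps power2_eq_square)

lemma Rd12_factor:
  "Rd q s z (exp (2 * (lam - m))) 1 2 =
     (exp (2 * lam) - exp (2 * m)) * poly [:(q^2 - 1) * z * s powi (-1) / exp (2 * m):] (exp (2 * lam))"
  unfolding exp_double_diff by (simp add: Rd_def field_simps)

lemma atLeastAtMost_1_3: "{1..3 :: nat} = {1, 2, 3}"
  by auto

lemma mono_Cons_Cons:
  "mono q s z lam (m # ms) \<alpha> \<beta> (i # is) (j # js) =
     Rent q s z (lam - m) \<alpha> i 1 j * mono q s z lam ms 1 \<beta> is js
   + Rent q s z (lam - m) \<alpha> i 2 j * mono q s z lam ms 2 \<beta> is js
   + Rent q s z (lam - m) \<alpha> i 3 j * mono q s z lam ms 3 \<beta> is js"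
  by (simp only: mono.simps atLeastAtMost_1_3) (simp add: add.assoc)

declare mono.simps(2) [simp del]

lemma mono_Cons_3_3:
  assumes "j \<in> {1, 2, 3}"
  shows "mono q s z lam (m # ms) 3 \<beta> (3 # is) (j # js) =
    (if j = 3 then Ra q z (exp (2 * (lam - m))) * mono q s z lam ms 3 \<beta> is js else 0)"
  using assms by (auto simp: mono_Cons_Cons Rent_def Rmat_def Let_def)

lemma mono_Cons_2_3:
  assumes "j \<in> {1, 2, 3}"
  shows "mono q s z lam (m # ms) 2 \<beta> (3 # is) (j # js) =
    (if j = 3 then Rb q z (exp (2 * (lam - m))) * mono q s z lam ms 2 \<beta> is js
     else if j = 2 then Rc q z (exp (2 * (lam - m))) * mono q s z lam ms 3 \<beta> is js
     else 0)"
  using assms by (auto simp: mono_Cons_Cons Rent_def Rmat_def Let_def)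

lemma mono_Cons_1_3:
  assumes "j \<in> {1, 2, 3}"
  shows "mono q s z lam (m # ms) 1 \<beta> (3 # is) (j # js) =
    (if j = 3 then Rd q s z (exp (2 * (lam - m))) 1 1 * mono q s z lam ms 1 \<beta> is js
     else if j = 2 then Rd q s z (exp (2 * (lam - m))) 1 2 * mono q s z lam ms 2 \<beta> is js
     else Rd q s z (exp (2 * (lam - m))) 1 3 * mono q s z lam ms 3 \<beta> is js)"
  using assms by (auto simp: mono_Cons_Cons Rent_def Rmat_def Let_def)

lemma mono_3_row3_eq_0:
  assumes "\<beta> \<noteq> 3" and "set js \<subseteq> {1, 2, 3}"
  shows "mono q s z lam ms 3 \<beta> (replicate (length ms) 3) js = 0"
  using assms(2)
proof (induction ms arbitrary: js)
  case Nil
  then show ?case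
    using assms(1) by simp
next
  case (Cons m ms)
  then show ?case
    by (cases js) (auto simp: mono_Cons_3_3)
qed

definition omega_multiple :: "complex list \<Rightarrow> nat \<Rightarrow> (complex \<Rightarrow> complex) \<Rightarrow> bool" where
  "omega_multiple ms n f \<longleftrightarrow>
     (\<exists>P. degree P \<le> n \<and>
          (\<forall>lam. f lam = (\<Prod>m\<leftarrow>ms. exp (2 * lam) - exp (2 * m)) * poly P (exp (2 * lam))))"

lemma omega_multiple_zero: "omega_multiple ms n (\<lambda>_. 0)"
  unfolding omega_multiple_def by (intro exI[of _ 0]) simp

lemma omega_multiple_Nil_const: "omega_multiple [] 0 (\<lambda>_. c)"
  unfolding omega_multiple_def by (intro exI[of _ "[:c:]"]) simp

lemma omega_multiple_Cons:
  assumes "omega_multiple ms n f" and "degree Q \<le> k"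
  shows "omega_multiple (m # ms) (n + k)
           (\<lambda>lam. (exp (2 * lam) - exp (2 * m)) * poly Q (exp (2 * lam)) * f lam)"
proof -
  obtain P where "degree P \<le> n"
    and f: "\<And>lam. f lam = (\<Prod>m\<leftarrow>ms. exp (2 * lam) - exp (2 * m)) * poly P (exp (2 * lam))"
    using assms(1) unfolding omega_multiple_def by blast
  then have "degree (Q * P) \<le> n + k"
    using assms(2) degree_mult_le[of Q P] by linarith
  then show ?thesis
    unfolding omega_multiple_def by (intro exI[of _ "Q * P"]) (simp add: f mult_ac)
qed

lemma omega_multiple_sum:
  assumes "finite A" and "\<And>i. i \<in> A \<Longrightarrow> omega_multiple ms n (f i)"
  shows "omega_multiple ms n (\<lambda>lam. \<Sum>i\<in>A. c i * f i lam)"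
proof -
  obtain P where deg: "\<And>i. i \<in> A \<Longrightarrow> degree (P i) \<le> n"
    and f: "\<And>i lam. i \<in> A \<Longrightarrow>
              f i lam = (\<Prod>m\<leftarrow>ms. exp (2 * lam) - exp (2 * m)) * poly (P i) (exp (2 * lam))"
    using assms(2) unfolding omega_multiple_def by metis
  have "degree (\<Sum>i\<in>A. smult (c i) (P i)) \<le> n"
    by (intro degree_sum_le[OF assms(1)] order.trans[OF degree_smult_le] deg)
  then show ?thesis
    unfolding omega_multiple_def
    by (intro exI[of _ "\<Sum>i\<in>A. smult (c i) (P i)"])
       (simp add: f poly_sum sum_distrib_right mult_ac cong: sum.cong)
qed

lemma omega_multiple_mono_2_2:
  assumes "set js \<subseteq> {1, 2, 3}"
  shows "omega_multiple ms (length ms)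
           (\<lambda>lam. mono q s z lam ms 2 2 (replicate (length ms) 3) js)"
  using assms
proof (induction ms arbitrary: js)
  case Nil
  then show ?case
    using omega_multiple_Nil_const by simp
next
  case (Cons m ms)
  show ?case
  proof (cases js)
    case Nil
    then show ?thesis
      using omega_multiple_zero by simp
  next
    case (Cons j js')
    then have j: "j \<in> {1, 2, 3}" and js': "set js' \<subseteq> {1, 2, 3}"
      using Cons.prems by auto
    show ?thesis
    proof (cases "j = 3")
      case True
      have "omega_multiple (m # ms) (length ms + 1)
              (\<lambda>lam. Rb q z (exp (2 * (lam - m))) * mono q s z lam ms 2 2 (replicate (length ms) 3) js')"
        unfolding Rb_factor by (rule omega_multiple_Cons[OF Cons.IH[OF js']]) simp
      then show ?thesis
        using True by (simp add: \<open>js = j # js'\<close> mono_Cons_2_3)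
    next
      case False
      then show ?thesis
        using j omega_multiple_zero
        by (simp add: \<open>js = j # js'\<close> mono_Cons_2_3 mono_3_row3_eq_0[OF _ js'] cong: if_cong)
    qed
  qed
qed

lemma omega_multiple_mono_1_2_Cons:
  assumes j: "j \<in> {1, 2, 3}" and js: "set js \<subseteq> {1, 2, 3}"
    and IH: "omega_multiple ms (length ms - 1)
               (\<lambda>lam. mono q s z lam ms 1 2 (replicate (length ms) 3) js)"
  shows "omega_multiple (m # ms) (length ms)
           (\<lambda>lam. mono q s z lam (m # ms) 1 2 (3 # replicate (length ms) 3) (j # js))"
proof -
  consider "j = 3" | "j = 2" | "j = 1"
    using j by blast
  then show ?thesis
  proof cases
    case 1
    then have row: "(\<lambda>lam. mono q s z lam (m # ms) 1 2 (3 # replicate (length ms) 3) (j # js)) =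
        (\<lambda>lam. Rd q s z (exp (2 * (lam - m))) 1 1 *
                 mono q s z lam ms 1 2 (replicate (length ms) 3) js)"
      by (simp add: mono_Cons_1_3 del: One_nat_def)
    show ?thesis
    proof (cases "ms = []")
      case True
      then show ?thesis
        unfolding row using omega_multiple_zero by simp
    next
      case False
      have "omega_multiple (m # ms) (length ms - 1 + 1)
              (\<lambda>lam. Rd q s z (exp (2 * (lam - m))) 1 1 *
                       mono q s z lam ms 1 2 (replicate (length ms) 3) js)"
        unfolding Rd11_factor by (rule omega_multiple_Cons[OF IH]) simp
      then show ?thesis
        unfolding row using False by simp
    qed
  next
    case 2
    have "omega_multiple (m # ms) (length ms + 0)
            (\<lambda>lam. Rd q s z (exp (2 * (lam - m))) 1 2 *
                     mono q s z lam ms 2 2 (replicate (length ms) 3) js)"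
      unfolding Rd12_factor by (rule omega_multiple_Cons[OF omega_multiple_mono_2_2[OF js]]) simp
    then show ?thesis
      by (simp add: mono_Cons_1_3 2 del: One_nat_def)
  next
    case 3
    then show ?thesis
      using omega_multiple_zero
      by (simp add: mono_Cons_1_3 mono_3_row3_eq_0[OF _ js] del: One_nat_def)
  qed
qed

lemma omega_multiple_mono_1_2:
  assumes "set js \<subseteq> {1, 2, 3}"
  shows "omega_multiple ms (length ms - 1)
           (\<lambda>lam. mono q s z lam ms 1 2 (replicate (length ms) 3) js)"
  using assms
proof (induction ms arbitrary: js)
  case Nil
  then show ?case
    using omega_multiple_zero by simp
next
  case (Cons m ms)
  show ?case
  proof (cases js)
    case Nil
    then show ?thesis
      using omega_multiple_zero by simp
  next
    case (Cons j js')
    then have "j \<in> {1, 2, 3}" and js': "set js' \<subseteq> {1, 2, 3}"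
      using Cons.prems by auto
    then show ?thesis
      using omega_multiple_mono_1_2_Cons[OF _ js' Cons.IH[OF js']] \<open>js = j # js'\<close> by simp
  qed
qed

lemma length_mus: "length (mus L mu) = L"
  by (simp add: mus_def)

lemma finite_states: "finite (states L)"
  using finite_lists_length_eq[of "{1, 2, 3 :: nat}" L] by (simp add: states_def conj_commute)

lemma prod_mus_eq_omegabar: "(\<Prod>m\<leftarrow>mus L mu. y - exp (2 * m)) = omegabar L mu y"
proof -
  have "set [1..<L + 1] = {1..L}"
    by auto
  then show ?thesis
    by (simp add: mus_def omegabar_def comp_def prod.distinct_set_conv_list[symmetric])
qed

theorem corollary2p6:
  fixes q s z :: complex and L :: nat and mu lam :: "nat \<Rightarrow> complex" and v1 :: complex
  assumes "q \<noteq> 0" and "s ^ 2 = q" and "z = q \<or> z = - (q ^ 3)" and "L \<ge> 1"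
  shows "\<exists>p :: complex poly. degree p \<le> L - 1 \<and>
           (\<forall>v2. Fbar q s z L mu v1 v2 lam
                   = omegabar L mu (exp (2 * v2)) * poly p (exp (2 * v2)))"
proof -
  define w where "w = applyOp L (Bop q s z L mu v1)
     (fold (\<lambda>k w. applyOp L (Eop q s z L mu (lam k)) w) [1..<L] (vac L))"
  have Fbar_eq: "Fbar q s z L mu v1 v2 lam =
      (\<Sum>js\<in>states L. w js * mono q s z v2 (mus L mu) 1 2 (replicate L 3) js)" for v2
    by (simp add: Fbar_def w_def applyOp_def Bop_def mult.commute)
  have "omega_multiple (mus L mu) (L - 1)
          (\<lambda>v2. \<Sum>js\<in>states L. w js * mono q s z v2 (mus L mu) 1 2 (replicate L 3) js)"
    using omega_multiple_mono_1_2[of _ "mus L mu" q s z] length_mus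
    by (intro omega_multiple_sum finite_states) (auto simp: states_def)
  then show ?thesis
    unfolding omega_multiple_def Fbar_eq prod_mus_eq_omegabar by blast
qed

end
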